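(* Let $R>0$ and let $t\mapsto p_t$, $t\in[0,1]$, be a convex curve from $e_R^1$ to $e_R^2$ contained in $T(e_R^1,e_R^2)$. Then for all $0\le t_1<t_2<t_3\le 1$ we have $p_{t_2}\in T(p_{t_1},p_{t_3})$.
   Context: Let $Q=[0,\infty)\times[0,\infty)\subset\mathbb{R}^2$, $e_R^1=(R,0)$, $e_R^2=(0,R)$, and let $\arg(p)\in[0,\pi/2]$ denote the polar angle of $p\in Q\setminus\{0\}$. For $u,w\in Q$ with $\arg(u)<\arg(w)$ define $T(u,w)=\{\lambda u+\mu w\in Q:\ \lambda\ge0,\ \mu\ge0,\ \lambda+\mu\ge1,\ \lambda+1\ge\mu,\ \mu+1\ge\lambda\}$. A curve $t\mapsto p_t$ in $Q$, $t\in[0,1]$, from $e_R^1$ to $e_R^2$ (i.e. $p_0=e_R^1$, $p_1=e_R^2$) is called convex if it is continuous, $t\mapsto\arg(p_t)$ is strictly increasing, and the bounded component of $Q\setminus\{p_t: t\in[0,1]\}$ is convex. *)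

theory Defs
  imports "HOL-Analysis.Analysis"
begin

definition quadQ :: "(real \<times> real) set" where
  "quadQ = {p. fst p \<ge> 0 \<and> snd p \<ge> 0}"

definition polar_arg :: "real \<times> real \<Rightarrow> real" where
  "polar_arg p = Arg (Complex (fst p) (snd p))"

definition eR1 :: "real \<Rightarrow> real \<times> real" where "eR1 R = (R, 0)"
definition eR2 :: "real \<Rightarrow> real \<times> real" where "eR2 R = (0, R)"

definition Tset :: "real \<times> real \<Rightarrow> real \<times> real \<Rightarrow> (real \<times> real) set" where
  "Tset u w = {q. q \<in> quadQ \<and> (\<exists>la mu. q = la *\<^sub>R u + mu *\<^sub>R w \<and> la \<ge> 0 \<and> mu \<ge> 0
       \<and> la + mu \<ge> 1 \<and> la + 1 \<ge> mu \<and> mu + 1 \<ge> la)}"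

text \<open>Convex curve in Q from a to b parametrised on [0,1]: continuous, with values in
  Q minus the origin, strictly increasing polar angle, and the bounded component of
  Q minus the trace is convex (stated for every bounded component).\<close>
definition convex_curve :: "(real \<Rightarrow> real \<times> real) \<Rightarrow> real \<times> real \<Rightarrow> real \<times> real \<Rightarrow> bool" where
  "convex_curve p a b \<longleftrightarrow>
     continuous_on {0..1} p \<and> p ` {0..1} \<subseteq> quadQ - {0} \<and> p 0 = a \<and> p 1 = b \<and>
     strict_mono_on {0..1} (\<lambda>t. polar_arg (p t)) \<and>
     (\<forall>C \<in> components (quadQ - p ` {0..1}). bounded C \<longrightarrow> convex C)"

end

theory Submission
  imports Defs
begin

text \<open>Since the polar angle sweeps \<open>[0, pi/2]\<close> monotonically along the curve, every nonzero
  point of the quadrant is a unique positive multiple \<open>c p t\<close> of a curve point. The points with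
  \<open>c < 1\<close> are joined to the origin by segments avoiding the curve, while those with \<open>c \<ge> 1\<close>
  form a closed set meeting the rest only on the curve; so the component of the origin in the
  complement of the curve consists of points with \<open>c \<le> 1\<close>, is bounded, and hence convex.
  Consequently a curve point \<open>p t\<^sub>2 = \<lambda> p t\<^sub>1 + \<mu> p t\<^sub>3\<close> with \<open>\<lambda>, \<mu> \<ge> 0\<close> cannot have
  \<open>\<lambda> + \<mu> < 1\<close>: a slightly enlarged convex combination of points of the component would be
  a multiple \<open>c p t\<^sub>2\<close> with \<open>c > 1\<close>. The conditions \<open>|\<lambda> - \<mu>| \<le> 1\<close> follow from the same
  chord property for the triples \<open>(0, t\<^sub>1, t\<^sub>2)\<close> and \<open>(t\<^sub>2, t\<^sub>3, 1)\<close>, combined with the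
  inequalities \<open>|x - y| \<le> R\<close> describing \<open>T(e\<^sub>1\<^sub>R, e\<^sub>2\<^sub>R)\<close>.\<close>

definition det2 :: "real \<times> real \<Rightarrow> real \<times> real \<Rightarrow> real" where
  "det2 a b = fst a * snd b - snd a * fst b"

lemma det2_swap: "det2 (prod.swap a) (prod.swap b) = det2 b a"
  by (simp add: det2_def)

lemma cramer_det2:
  assumes "det2 u w \<noteq> 0"
  shows "v = (det2 v w / det2 u w) *\<^sub>R u + (det2 u v / det2 u w) *\<^sub>R w"
proof -
  obtain a b c d e f where uvw: "u = (a, b)" "v = (c, d)" "w = (e, f)"
    by (cases u, cases v, cases w) auto
  have D: "a * f - b * e \<noteq> 0" using assms by (simp add: det2_def uvw)
  have "c * (a * f - b * e) = (c * f - d * e) * a + (a * d - b * c) * e"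
    and "d * (a * f - b * e) = (c * f - d * e) * b + (a * d - b * c) * f"
    by algebra+
  with D show ?thesis
    by (simp add: uvw det2_def add_divide_distrib[symmetric] nonzero_eq_divide_eq)
qed

lemma polar_arg_polar_form:
  assumes "p \<in> quadQ" "p \<noteq> 0"
  shows "fst p = norm p * cos (polar_arg p)" and "snd p = norm p * sin (polar_arg p)"
proof -
  let ?z = "Complex (fst p) (snd p)"
  have "?z \<noteq> 0" using assms(2) by (cases p) (simp add: complex_eq_iff zero_prod_def)
  then have z: "?z = of_real (cmod ?z) * exp (\<i> * of_real (Arg ?z))"
    by (rule Arg_eq)
  have norm: "cmod ?z = norm p"
    by (cases p) (simp add: complex_norm norm_Pair)
  have "Re ?z = cmod ?z * cos (Arg ?z)" "Im ?z = cmod ?z * sin (Arg ?z)"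
    by (subst z; simp add: Re_exp Im_exp)+
  then show "fst p = norm p * cos (polar_arg p)" "snd p = norm p * sin (polar_arg p)"
    by (simp_all add: norm polar_arg_def)
qed

lemma polar_arg_bounds:
  assumes "p \<in> quadQ"
  shows "0 \<le> polar_arg p" and "polar_arg p \<le> pi/2"
proof -
  show "0 \<le> polar_arg p"
    using assms by (simp add: polar_arg_def Arg_less_0 quadQ_def)
  have "\<bar>Arg (Complex (fst p) (snd p))\<bar> \<le> pi/2"
    using assms Arg_Re_nonneg[of "Complex (fst p) (snd p)"] by (simp add: quadQ_def)
  then show "polar_arg p \<le> pi/2"
    unfolding polar_arg_def by linarith
qed

lemma det2_polar:
  assumes "a \<in> quadQ" "a \<noteq> 0" "b \<in> quadQ" "b \<noteq> 0"
  shows "det2 a b = norm a * norm b * sin (polar_arg b - polar_arg a)"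
  using polar_arg_polar_form[OF assms(1,2)] polar_arg_polar_form[OF assms(3,4)]
  by (simp add: det2_def sin_diff algebra_simps)

lemma polar_arg_scaleR: "c > 0 \<Longrightarrow> polar_arg (c *\<^sub>R x) = polar_arg x"
proof -
  assume "c > 0"
  have "Complex (fst (c *\<^sub>R x)) (snd (c *\<^sub>R x)) = of_real c * Complex (fst x) (snd x)"
    by (simp add: complex_eq_iff)
  with \<open>c > 0\<close> show ?thesis by (simp add: polar_arg_def)
qed

lemma continuous_on_polar_arg: "continuous_on (quadQ - {0}) polar_arg"
  unfolding polar_arg_def
proof (rule continuous_on_Arg')
  show "continuous_on (quadQ - {0}) (\<lambda>p. Complex (fst p) (snd p))"
    unfolding Complex_eq by (intro continuous_intros)
  show "Complex (fst z) (snd z) \<notin> \<real>\<^sub>\<le>\<^sub>0" if "z \<in> quadQ - {0}" for z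
    using that by (cases z) (auto simp: complex_nonpos_Reals_iff quadQ_def zero_prod_def)
qed

lemma polar_arg_eR1: "R > 0 \<Longrightarrow> polar_arg (eR1 R) = 0"
  by (simp add: polar_arg_def eR1_def Complex_eq)

lemma polar_arg_eR2: "R > 0 \<Longrightarrow> polar_arg (eR2 R) = pi/2"
proof -
  assume "R > 0"
  have "Complex 0 R = rcis R (pi/2)" by (simp add: rcis_def cis.ctr complex_eq_iff)
  with \<open>R > 0\<close> show ?thesis by (simp add: polar_arg_def eR2_def Arg_rcis)
qed

lemma Tset_eR_iff:
  assumes "R > 0"
  shows "q \<in> Tset (eR1 R) (eR2 R) \<longleftrightarrow>
    0 \<le> fst q \<and> 0 \<le> snd q \<and> R \<le> fst q + snd q \<and> fst q - snd q \<le> R \<and> snd q - fst q \<le> R"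
proof -
  have coeffs: "q = la *\<^sub>R eR1 R + mu *\<^sub>R eR2 R \<longleftrightarrow> la = fst q / R \<and> mu = snd q / R"
    for la mu
    using assms by (auto simp: eR1_def eR2_def prod_eq_iff field_simps)
  have "q \<in> Tset (eR1 R) (eR2 R) \<longleftrightarrow> q \<in> quadQ \<and> 0 \<le> fst q / R \<and> 0 \<le> snd q / R
      \<and> 1 \<le> fst q / R + snd q / R \<and> snd q / R \<le> fst q / R + 1 \<and> fst q / R \<le> snd q / R + 1"
    by (simp add: Tset_def coeffs)
  also have "\<dots> \<longleftrightarrow> 0 \<le> fst q \<and> 0 \<le> snd q \<and> R \<le> fst q + snd q \<and> fst q - snd q \<le> R
      \<and> snd q - fst q \<le> R"
    using assms by (auto simp: quadQ_def field_simps)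
  finally show ?thesis .
qed

lemma swap_in_Tset_eR_iff:
  "R > 0 \<Longrightarrow> prod.swap q \<in> Tset (eR1 R) (eR2 R) \<longleftrightarrow> q \<in> Tset (eR1 R) (eR2 R)"
  by (auto simp: Tset_eR_iff)

lemma det2_le_Tset_bounds:
  assumes "0 \<le> fst u" "0 \<le> snd u" "0 \<le> fst w" "0 \<le> snd w"
    and "fst u - snd u \<le> R" "snd w - fst w \<le> R"
  shows "det2 u w \<le> R * (snd u + snd w)"
proof (cases "fst u \<le> R")
  case True
  have "snd w * (R - fst u) \<ge> 0" "snd u * fst w \<ge> 0" "R * snd u \<ge> 0"
    using True assms by auto
  then show ?thesis by (simp add: det2_def algebra_simps)
next
  case False
  have "(fst u - R) * (R + fst w) \<le> snd u * (R + fst w)"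
    by (rule mult_right_mono) (use assms in auto)
  moreover have "(fst u - R) * snd w \<le> (fst u - R) * (R + fst w)"
    by (rule mult_left_mono) (use assms False in auto)
  ultimately show ?thesis by (simp add: det2_def algebra_simps)
qed

text \<open>The second alternative says that \<open>u\<close> lies on or beyond the chord from \<open>e\<^sub>1\<^sub>R\<close> to \<open>v\<close>.\<close>

lemma Tset_eR_coeff_bound:
  assumes "R > 0"
    and T: "u \<in> Tset (eR1 R) (eR2 R)" "v \<in> Tset (eR1 R) (eR2 R)" "w \<in> Tset (eR1 R) (eR2 R)"
    and v: "v = la *\<^sub>R u + mu *\<^sub>R w" and "0 \<le> la" "0 \<le> mu"
    and u: "u = eR1 R \<or> (0 < snd u \<and> det2 (eR1 R) v \<le> det2 (eR1 R) u + det2 u v)"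
  shows "la \<le> mu + 1"
proof -
  have vx: "fst v = la * fst u + mu * fst w" and vy: "snd v = la * snd u + mu * snd w"
    using v by auto
  note bounds = T[unfolded Tset_eR_iff[OF \<open>R > 0\<close>]]
  from u show ?thesis
  proof
    assume "u = eR1 R"
    then have "fst u = R" "snd u = 0" by (simp_all add: eR1_def)
    moreover have "mu * (snd w - fst w) \<le> mu * R"
      using bounds(3) \<open>0 \<le> mu\<close> by (simp add: mult_left_mono)
    ultimately have "la * R \<le> (mu + 1) * R"
      using bounds(2) vx vy by (simp add: algebra_simps)
    then show ?thesis using \<open>R > 0\<close> by simp
  next
    assume chord: "0 < snd u \<and> det2 (eR1 R) v \<le> det2 (eR1 R) u + det2 u v"
    have "det2 u w \<le> R * (snd u + snd w)"
      by (rule det2_le_Tset_bounds) (use bounds in auto)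
    then have "0 \<le> mu * (R * (snd u + snd w) - det2 u w)"
      using \<open>0 \<le> mu\<close> by simp
    moreover have "det2 u v = mu * det2 u w"
      using vx vy by (simp add: det2_def algebra_simps)
    ultimately have "0 \<le> R * snd u * (mu + 1 - la)"
      using chord vy by (simp add: det2_def eR1_def algebra_simps)
    moreover have "0 < R * snd u"
      using chord \<open>R > 0\<close> by simp
    ultimately show ?thesis
      by (simp add: zero_le_mult_iff)
  qed
qed

lemma Tset_eR_coeff_bound':
  assumes "R > 0"
    and T: "u \<in> Tset (eR1 R) (eR2 R)" "v \<in> Tset (eR1 R) (eR2 R)" "w \<in> Tset (eR1 R) (eR2 R)"
    and v: "v = la *\<^sub>R u + mu *\<^sub>R w" and "0 \<le> la" "0 \<le> mu"
    and w: "w = eR2 R \<or> (0 < fst w \<and> det2 v (eR2 R) \<le> det2 v w + det2 w (eR2 R))"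
  shows "mu \<le> la + 1"
proof (rule Tset_eR_coeff_bound[of R "prod.swap w" "prod.swap v" "prod.swap u"])
  have e1: "eR1 R = prod.swap (eR2 R)"
    by (simp add: eR1_def eR2_def)
  show "prod.swap w = eR1 R \<or> (0 < snd (prod.swap w) \<and> det2 (eR1 R) (prod.swap v)
      \<le> det2 (eR1 R) (prod.swap w) + det2 (prod.swap w) (prod.swap v))"
    using w unfolding e1 det2_swap by auto
  show "prod.swap v = mu *\<^sub>R prod.swap w + la *\<^sub>R prod.swap u"
    using v by (simp add: prod_eq_iff)
qed (use assms in \<open>simp_all add: swap_in_Tset_eR_iff\<close>)

locale quadrant_convex_curve =
  fixes p :: "real \<Rightarrow> real \<times> real" and a b :: "real \<times> real"
  assumes convex_curve: "convex_curve p a b"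
    and polar_arg_start: "polar_arg a = 0"
    and polar_arg_end: "polar_arg b = pi/2"
begin

lemma curve_in_quadrant: "t \<in> {0..1} \<Longrightarrow> p t \<in> quadQ"
  and curve_nonzero: "t \<in> {0..1} \<Longrightarrow> p t \<noteq> 0"
  using convex_curve unfolding convex_curve_def by blast+

lemma continuous_on_curve: "continuous_on {0..1} p"
  using convex_curve unfolding convex_curve_def by blast

lemma curve_start: "p 0 = a" and curve_end: "p 1 = b"
  using convex_curve unfolding convex_curve_def by blast+

lemma polar_arg_curve_less:
  "t \<in> {0..1} \<Longrightarrow> t' \<in> {0..1} \<Longrightarrow> t < t' \<Longrightarrow> polar_arg (p t) < polar_arg (p t')"
  using convex_curve unfolding convex_curve_def strict_mono_on_def by blast

lemma curve_ray_unique: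
  assumes "c > 0" "c' > 0" "t \<in> {0..1}" "t' \<in> {0..1}" "c *\<^sub>R p t = c' *\<^sub>R p t'"
  shows "t = t'" and "c = c'"
proof -
  have "polar_arg (p t) = polar_arg (p t')"
    using polar_arg_scaleR[OF assms(1), of "p t"] polar_arg_scaleR[OF assms(2), of "p t'"] assms(5)
    by simp
  then show "t = t'"
    using polar_arg_curve_less assms(3,4) by (metis less_irrefl linorder_neqE_linordered_idom)
  then have "(c - c') *\<^sub>R p t = 0"
    using assms(5) by (simp add: algebra_simps)
  then show "c = c'"
    using curve_nonzero[OF assms(3)] by simp
qed

lemma quadrant_ray_through_curve:
  assumes "x \<in> quadQ" "x \<noteq> 0"
  obtains t c where "t \<in> {0..1}" "c > 0" "x = c *\<^sub>R p t"
proof -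
  have "continuous_on {0..1} (\<lambda>t. polar_arg (p t))"
    by (rule continuous_on_compose2[OF continuous_on_polar_arg continuous_on_curve])
      (use curve_in_quadrant curve_nonzero in auto)
  then obtain t where t: "t \<in> {0..1}" "polar_arg (p t) = polar_arg x"
    using IVT'[of "\<lambda>t. polar_arg (p t)" 0 "polar_arg x" 1] polar_arg_bounds[OF assms(1)]
    by (auto simp: curve_start curve_end polar_arg_start polar_arg_end)
  note x = polar_arg_polar_form[OF assms]
    and pt = polar_arg_polar_form[OF curve_in_quadrant[OF t(1)] curve_nonzero[OF t(1)], unfolded t(2)]
  have "x = (norm x / norm (p t)) *\<^sub>R p t"
    by (rule prod_eqI; simp only: fst_scaleR snd_scaleR x pt)
      (use curve_nonzero[OF t(1)] in simp_all)
  moreover have "norm x / norm (p t) > 0"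
    using assms(2) curve_nonzero[OF t(1)] by simp
  ultimately show thesis using that t(1) by blast
qed

definition inner_region :: "(real \<times> real) set" where
  "inner_region = (\<lambda>z. fst z *\<^sub>R p (snd z)) ` ({0..1} \<times> {0..1})"

definition outer_region :: "(real \<times> real) set" where
  "outer_region = {c *\<^sub>R p t | c t. 1 \<le> c \<and> t \<in> {0..1}}"

lemma compact_inner_region: "compact inner_region"
  unfolding inner_region_def
proof (rule compact_continuous_image)
  show "compact ({0..1::real} \<times> {0..1::real})"
    by (intro compact_Times compact_Icc)
  have "continuous_on ({0..1} \<times> {0..1}) (\<lambda>z::real \<times> real. p (snd z))"
    by (rule continuous_on_compose2[OF continuous_on_curve]) (auto intro: continuous_intros)
  then show "continuous_on ({0..1} \<times> {0..1}) (\<lambda>z::real \<times> real. fst z *\<^sub>R p (snd z))"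
    by (intro continuous_intros)
qed

lemma zero_in_inner_region: "0 \<in> inner_region"
  unfolding inner_region_def by (rule image_eqI[of _ _ "(0, 0)"]) auto

lemma closed_outer_region: "closed outer_region"
  unfolding closed_sequential_limits
proof (intro allI impI, elim conjE)
  fix x l
  assume "\<forall>n. x n \<in> outer_region" and xl: "x \<longlonglongrightarrow> l"
  then have "\<forall>n. \<exists>c t. 1 \<le> c \<and> t \<in> {0..1} \<and> x n = c *\<^sub>R p t"
    unfolding outer_region_def by blast
  then obtain c t where "\<And>n. 1 \<le> c n \<and> t n \<in> {0..1} \<and> x n = c n *\<^sub>R p (t n)"
    by metis
  then have ct: "\<And>n. 1 \<le> c n" "\<And>n. t n \<in> {0..1}" "\<And>n. x n = c n *\<^sub>R p (t n)"
    by blast+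
  have "seq_compact {0..1::real}"
    by (intro compact_imp_seq_compact compact_Icc)
  then obtain t0 r where t0: "t0 \<in> {0..1}" "strict_mono r" "(t \<circ> r) \<longlonglongrightarrow> t0"
    unfolding seq_compact_def using ct(2) by metis
  have pt: "(\<lambda>n. p (t (r n))) \<longlonglongrightarrow> p t0"
    using continuous_on_tendsto_compose[OF continuous_on_curve t0(3) t0(1)] ct(2)
    by (simp add: o_def)
  have xr: "(\<lambda>n. x (r n)) \<longlonglongrightarrow> l"
    using LIMSEQ_subseq_LIMSEQ[OF xl t0(2)] by (simp add: o_def)
  define c0 where "c0 = norm l / norm (p t0)"
  have "c (r n) = norm (x (r n)) / norm (p (t (r n)))" for n
    using ct[of "r n"] curve_nonzero[OF ct(2)] by simp
  moreover have "(\<lambda>n. norm (x (r n)) / norm (p (t (r n)))) \<longlonglongrightarrow> c0"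
    unfolding c0_def using xr pt curve_nonzero[OF t0(1)] by (auto intro!: tendsto_intros)
  ultimately have cr: "(\<lambda>n. c (r n)) \<longlonglongrightarrow> c0"
    by simp
  have "(\<lambda>n. x (r n)) \<longlonglongrightarrow> c0 *\<^sub>R p t0"
    unfolding ct(3) using cr pt by (rule tendsto_scaleR)
  then have "l = c0 *\<^sub>R p t0"
    using xr LIMSEQ_unique by blast
  moreover have "1 \<le> c0"
    by (rule LIMSEQ_le_const[OF cr]) (use ct(1) in auto)
  ultimately show "l \<in> outer_region"
    unfolding outer_region_def using t0(1) by blast
qed

lemma quadrant_subset_inner_outer: "quadQ \<subseteq> inner_region \<union> outer_region"
proof
  fix x assume x: "x \<in> quadQ"
  show "x \<in> inner_region \<union> outer_region"
  proof (cases "x = 0")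
    case False
    then obtain t c where tc: "t \<in> {0..1}" "c > 0" "x = c *\<^sub>R p t"
      using quadrant_ray_through_curve x by blast
    show ?thesis
    proof (cases "c \<le> 1")
      case True
      then have "x \<in> inner_region"
        unfolding inner_region_def using tc by (intro image_eqI[of _ _ "(c, t)"]) auto
      then show ?thesis ..
    next
      case False
      then have "x \<in> outer_region"
        unfolding outer_region_def using tc by force
      then show ?thesis ..
    qed
  qed (simp add: zero_in_inner_region)
qed

lemma inner_Int_outer_subset_curve: "inner_region \<inter> outer_region \<subseteq> p ` {0..1}"
proof
  fix x assume "x \<in> inner_region \<inter> outer_region"
  then obtain c t c' t' where c: "c \<in> {0..1}" "t \<in> {0..1}" "x = c *\<^sub>R p t"
    and c': "1 \<le> c'" "t' \<in> {0..1}" "x = c' *\<^sub>R p t'"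
    unfolding inner_region_def outer_region_def by auto
  have "c \<noteq> 0"
    using c c' curve_nonzero[OF c'(2)] by auto
  then have "c = c'"
    using c c' curve_ray_unique(2)[of c c' t t'] by auto
  then show "x \<in> p ` {0..1}"
    using c c' by auto
qed

abbreviation origin_component :: "(real \<times> real) set" where
  "origin_component \<equiv> connected_component_set (quadQ - p ` {0..1}) 0"

lemma zero_in_curve_complement: "0 \<in> quadQ - p ` {0..1}"
  using curve_nonzero by (auto simp: quadQ_def)

lemma origin_component_subset_inner: "origin_component \<subseteq> inner_region"
  and origin_component_Int_outer: "origin_component \<inter> outer_region = {}"
proof -
  have "origin_component \<subseteq> inner_region \<union> outer_region"
    using quadrant_subset_inner_outer connected_component_subset by blast
  moreover have "inner_region \<inter> outer_region \<inter> origin_component = {}"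
    using inner_Int_outer_subset_curve connected_component_subset by blast
  moreover have "inner_region \<inter> origin_component \<noteq> {}"
    using zero_in_inner_region zero_in_curve_complement by auto
  ultimately have "origin_component \<inter> outer_region = {}"
    using connected_connected_component[of "quadQ - p ` {0..1}" 0]
      compact_imp_closed[OF compact_inner_region] closed_outer_region
    unfolding connected_closed by blast
  then show "origin_component \<inter> outer_region = {}" "origin_component \<subseteq> inner_region"
    using \<open>origin_component \<subseteq> inner_region \<union> outer_region\<close> by blast+
qed

lemma convex_origin_component: "convex origin_component"
proof -
  have "origin_component \<in> components (quadQ - p ` {0..1})"
    using zero_in_curve_complement unfolding components_iff by blast
  moreover have "bounded origin_component"
    using origin_component_subset_inner compact_imp_bounded[OF compact_inner_region]
    by (rule bounded_subset[rotated])
  ultimately show ?thesis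
    using convex_curve unfolding convex_curve_def by blast
qed

lemma scaleR_curve_in_origin_component:
  assumes "t \<in> {0..1}" "0 \<le> r" "r < 1"
  shows "r *\<^sub>R p t \<in> origin_component"
proof -
  let ?S = "(\<lambda>s. s *\<^sub>R p t) ` {0..r}"
  have "y \<notin> p ` {0..1}" if y: "y \<in> ?S" for y
  proof
    obtain s where s: "s \<in> {0..r}" "y = s *\<^sub>R p t"
      using y by blast
    assume "y \<in> p ` {0..1}"
    then obtain t' where t': "t' \<in> {0..1}" "s *\<^sub>R p t = 1 *\<^sub>R p t'"
      using s(2) by auto
    then have "s \<noteq> 0"
      using curve_nonzero[OF t'(1)] by auto
    then have "0 < s"
      using s(1) by simp
    then have "s = 1"
      using curve_ray_unique(2)[OF _ _ assms(1) t'] by simp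
    then show False
      using s(1) assms by simp
  qed
  moreover have "?S \<subseteq> quadQ"
    using curve_in_quadrant[OF assms(1)] by (auto simp: quadQ_def)
  ultimately have "?S \<subseteq> quadQ - p ` {0..1}"
    by blast
  moreover have "connected ?S"
    by (intro connected_continuous_image connected_Icc continuous_intros)
  moreover have "0 \<in> ?S"
    using assms by (intro image_eqI[of _ _ 0]) auto
  ultimately have "?S \<subseteq> origin_component"
    by (intro connected_component_maximal)
  moreover have "r *\<^sub>R p t \<in> ?S"
    using assms by auto
  ultimately show ?thesis
    by blast
qed

lemma curve_coeff_sum_ge_one:
  assumes "t1 \<in> {0..1}" "t2 \<in> {0..1}" "t3 \<in> {0..1}"
    and v: "p t2 = la *\<^sub>R p t1 + mu *\<^sub>R p t3" and "0 \<le> la" "0 \<le> mu"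
  shows "1 \<le> la + mu"
proof (rule ccontr)
  define s where "s = la + mu"
  assume "\<not> 1 \<le> la + mu"
  then have "s < 1" by (simp add: s_def)
  have "0 < s"
  proof (rule ccontr)
    assume "\<not> 0 < s"
    then have "la = 0" "mu = 0"
      using \<open>0 \<le> la\<close> \<open>0 \<le> mu\<close> by (auto simp: s_def)
    then show False
      using v curve_nonzero[OF assms(2)] by simp
  qed
  define r where "r = (1 + s) / 2"
  have r: "0 \<le> r" "r < 1" "s < r"
    using \<open>0 < s\<close> \<open>s < 1\<close> by (auto simp: r_def)
  have "la / s + mu / s = 1"
    using \<open>0 < s\<close> by (simp add: s_def flip: add_divide_distrib)
  then have "(la / s) *\<^sub>R (r *\<^sub>R p t1) + (mu / s) *\<^sub>R (r *\<^sub>R p t3) \<in> origin_component"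
    using \<open>0 < s\<close> \<open>0 \<le> la\<close> \<open>0 \<le> mu\<close> r assms(1,3)
    by (intro convexD[OF convex_origin_component] scaleR_curve_in_origin_component) simp_all
  moreover have "(la / s) *\<^sub>R (r *\<^sub>R p t1) + (mu / s) *\<^sub>R (r *\<^sub>R p t3) = (r / s) *\<^sub>R p t2"
    by (simp add: v scaleR_add_right mult.commute)
  moreover have "(r / s) *\<^sub>R p t2 \<in> outer_region"
    unfolding outer_region_def using assms(2) r \<open>0 < s\<close> by force
  ultimately show False
    using origin_component_Int_outer by (metis disjoint_iff)
qed

lemma det2_curve_pos:
  assumes "t \<in> {0..1}" "t' \<in> {0..1}" "t < t'"
  shows "0 < det2 (p t) (p t')"
proof -
  note pt = curve_in_quadrant[OF assms(1)] curve_nonzero[OF assms(1)]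
    and pt' = curve_in_quadrant[OF assms(2)] curve_nonzero[OF assms(2)]
  have "0 < sin (polar_arg (p t') - polar_arg (p t))"
    using polar_arg_curve_less[OF assms] polar_arg_bounds[OF pt(1)] polar_arg_bounds[OF pt'(1)]
    by (intro sin_gt_zero) auto
  then show ?thesis
    using det2_polar[OF pt pt'] pt(2) pt'(2) by simp
qed

lemma curve_chord_decomp:
  assumes "0 \<le> t1" "t1 < t2" "t2 < t3" "t3 \<le> 1"
  obtains la mu where "p t2 = la *\<^sub>R p t1 + mu *\<^sub>R p t3" "0 \<le> la" "0 \<le> mu" "1 \<le> la + mu"
    and "la = det2 (p t2) (p t3) / det2 (p t1) (p t3)" "mu = det2 (p t1) (p t2) / det2 (p t1) (p t3)"
proof -
  have t: "t1 \<in> {0..1}" "t2 \<in> {0..1}" "t3 \<in> {0..1}"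
    using assms by auto
  let ?la = "det2 (p t2) (p t3) / det2 (p t1) (p t3)"
    and ?mu = "det2 (p t1) (p t2) / det2 (p t1) (p t3)"
  have pos: "0 < det2 (p t1) (p t3)" "0 < det2 (p t2) (p t3)" "0 < det2 (p t1) (p t2)"
    using det2_curve_pos t assms by auto
  then have "p t2 = ?la *\<^sub>R p t1 + ?mu *\<^sub>R p t3"
    by (intro cramer_det2) simp
  moreover have "0 \<le> ?la" "0 \<le> ?mu"
    using pos by simp_all
  ultimately show thesis
    using that curve_coeff_sum_ge_one[OF t] by blast
qed

lemma curve_chord_det2:
  assumes "0 \<le> t1" "t1 < t2" "t2 < t3" "t3 \<le> 1"
  shows "det2 (p t1) (p t3) \<le> det2 (p t1) (p t2) + det2 (p t2) (p t3)"
proof -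
  obtain la mu where "1 \<le> la + mu"
    and "la = det2 (p t2) (p t3) / det2 (p t1) (p t3)" "mu = det2 (p t1) (p t2) / det2 (p t1) (p t3)"
    using curve_chord_decomp[OF assms] by blast
  moreover have "0 < det2 (p t1) (p t3)"
    using det2_curve_pos assms by auto
  ultimately show ?thesis
    by (simp add: add_divide_distrib[symmetric] le_divide_eq)
qed

lemma snd_curve_pos:
  assumes "0 < t" "t \<le> 1"
  shows "0 < snd (p t)"
proof -
  have t: "t \<in> {0..1}" using assms by simp
  have "0 < polar_arg (p t)"
    using polar_arg_curve_less[of 0 t] assms curve_start polar_arg_start by simp
  then have "0 < sin (polar_arg (p t))"
    using polar_arg_bounds[OF curve_in_quadrant[OF t]] by (intro sin_gt_zero) auto
  then show ?thesis
    using polar_arg_polar_form[OF curve_in_quadrant[OF t] curve_nonzero[OF t]] curve_nonzero[OF t]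
    by simp
qed

lemma fst_curve_pos:
  assumes "0 \<le> t" "t < 1"
  shows "0 < fst (p t)"
proof -
  have t: "t \<in> {0..1}" using assms by simp
  have "polar_arg (p t) < pi/2"
    using polar_arg_curve_less[of t 1] assms curve_end polar_arg_end by simp
  then have "0 < cos (polar_arg (p t))"
    using polar_arg_bounds[OF curve_in_quadrant[OF t]] by (intro cos_gt_zero_pi) auto
  then show ?thesis
    using polar_arg_polar_form[OF curve_in_quadrant[OF t] curve_nonzero[OF t]] curve_nonzero[OF t]
    by simp
qed

end

theorem lemma3p6:
  fixes R :: real and p :: "real \<Rightarrow> real \<times> real"
  assumes "R > 0"
    and "convex_curve p (eR1 R) (eR2 R)"
    and "p ` {0..1} \<subseteq> Tset (eR1 R) (eR2 R)"
  shows "\<forall>t1 t2 t3. 0 \<le> t1 \<and> t1 < t2 \<and> t2 < t3 \<and> t3 \<le> 1 \<longrightarrow> p t2 \<in> Tset (p t1) (p t3)"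
proof (intro allI impI, elim conjE)
  fix t1 t2 t3 :: real
  assume t: "0 \<le> t1" "t1 < t2" "t2 < t3" "t3 \<le> 1"
  interpret quadrant_convex_curve p "eR1 R" "eR2 R"
    using assms(1,2) by unfold_locales (simp_all add: polar_arg_eR1 polar_arg_eR2)
  obtain la mu where v: "p t2 = la *\<^sub>R p t1 + mu *\<^sub>R p t3" and "0 \<le> la" "0 \<le> mu" "1 \<le> la + mu"
    using curve_chord_decomp[OF t] by blast
  have T: "p t1 \<in> Tset (eR1 R) (eR2 R)" "p t2 \<in> Tset (eR1 R) (eR2 R)" "p t3 \<in> Tset (eR1 R) (eR2 R)"
    using assms(3) t by auto
  have "la \<le> mu + 1"
    using curve_chord_det2[of 0 t1 t2] snd_curve_pos[of t1] curve_start t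
    by (intro Tset_eR_coeff_bound[OF assms(1) T v \<open>0 \<le> la\<close> \<open>0 \<le> mu\<close>]) (cases "t1 = 0"; auto)
  moreover have "mu \<le> la + 1"
    using curve_chord_det2[of t2 t3 1] fst_curve_pos[of t3] curve_end t
    by (intro Tset_eR_coeff_bound'[OF assms(1) T v \<open>0 \<le> la\<close> \<open>0 \<le> mu\<close>]) (cases "t3 = 1"; auto)
  moreover have "p t2 \<in> quadQ"
    using t by (intro curve_in_quadrant) simp
  ultimately show "p t2 \<in> Tset (p t1) (p t3)"
    unfolding Tset_def mem_Collect_eq using v \<open>0 \<le> la\<close> \<open>0 \<le> mu\<close> \<open>1 \<le> la + mu\<close> by blast
qed

end
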